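(* Let $0<p_{\mathrm{gen}}<1$, $0<p_{\mathrm{swap}}\le1$. Let $T_0$ be either geometric on $\{1,2,\dots\}$ with parameter $p_{\mathrm{gen}}$ or exponential with $\Pr(T_0>x)=e^{-p_{\mathrm{gen}}x}$. For $n\ge0$ let $M_n=\max(T_n^{(1)},T_n^{(2)})$ (i.i.d. copies of $T_n$) and $T_{n+1}=\sum_{k=1}^{K}M_n^{(k)}$ with $M_n^{(k)}$ i.i.d. copies of $M_n$ and $K$ independent, geometric on $\{1,2,\dots\}$ with parameter $p_{\mathrm{swap}}$. Define $R_0=\max(T_0^{(1)},T_0^{(2)})$ and $R_{n+1}=\sum_{j=1}^{N}R_n^{(j)}$ with $R_n^{(j)}$ i.i.d. copies of $R_n$ and $N=\max(K^{(1)},K^{(2)})$ independent, $K^{(1)},K^{(2)}$ i.i.d. geometric on $\{1,2,\dots\}$ with parameter $p_{\mathrm{swap}}$. Then $M_n\ge_{\mathrm{st}}R_n$ for all $n\ge0$.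
   Context: A geometric random variable on $\{1,2,\dots\}$ with parameter $q$ satisfies $\Pr(K=k)=q(1-q)^{k-1}$. For random variables $X,Y$ with domains $D_X,D_Y\subseteq\mathbb{R}$, $X\ge_{\mathrm{st}}Y$ means $\Pr(X>z)\ge\Pr(Y>z)$ for all $z\in D_X\cap D_Y$. *)

theory Defs
  imports "HOL-Probability.Probability"
begin

text \<open>Laws (distributions) are represented as measures.
  Geometric law on {1,2,...} with parameter q: Pr(K=k) = q(1-q)^(k-1).\<close>
definition geom1 :: "real \<Rightarrow> nat measure" where
  "geom1 q = measure_pmf (map_pmf Suc (geometric_pmf q))"

definition geomT0 :: "real \<Rightarrow> real measure" where
  "geomT0 p = distr (geom1 p) borel real"

definition expT0 :: "real \<Rightarrow> real measure" where
  "expT0 p = density lborel (exponential_density p)"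

definition max2 :: "('a::linorder) measure \<Rightarrow> 'a measure" where
  "max2 mu = distr (mu \<Otimes>\<^sub>M mu) mu (\<lambda>(x, y). max x y)"

definition rsum :: "nat measure \<Rightarrow> real measure \<Rightarrow> real measure" where
  "rsum Kd mu = distr (Kd \<Otimes>\<^sub>M (\<Pi>\<^sub>M i\<in>(UNIV::nat set). mu)) borel
                  (\<lambda>(k, xs). \<Sum>i<k. xs i)"

primrec Tlaw :: "real \<Rightarrow> real measure \<Rightarrow> nat \<Rightarrow> real measure" where
  "Tlaw ps T0 0 = T0"
| "Tlaw ps T0 (Suc n) = rsum (geom1 ps) (max2 (Tlaw ps T0 n))"

definition Mlaw :: "real \<Rightarrow> real measure \<Rightarrow> nat \<Rightarrow> real measure" where
  "Mlaw ps T0 n = max2 (Tlaw ps T0 n)"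

primrec Rlaw :: "real \<Rightarrow> real measure \<Rightarrow> nat \<Rightarrow> real measure" where
  "Rlaw ps T0 0 = max2 T0"
| "Rlaw ps T0 (Suc n) = rsum (max2 (geom1 ps)) (Rlaw ps T0 n)"

end

(*
  Write F for distribution functions and psi_k for the distribution function of the sum of k
  independent copies of a law. The random sum of K copies has distribution function E psi_K,
  so the maximum of two independent such sums has distribution function
  (E psi_K)^2 = E (psi_K1 * psi_K2) <= E psi_max(K1,K2), because psi_i and psi_j lie in [0,1]
  and psi_max(i,j) is one of them. Moreover psi_k is antitone in the law with respect to the
  stochastic order, since convolution preserves that order. Hence F(M_n) <= F(R_n) passes from
  n to n + 1, starting from M_0 = R_0.
*)
theory Submission
  imports Defs
begin

definition ennreal_cdf :: "real measure \<Rightarrow> real \<Rightarrow> ennreal" where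
  "ennreal_cdf mu z = emeasure mu {..z}"

definition sum_cdf :: "real measure \<Rightarrow> nat \<Rightarrow> real \<Rightarrow> ennreal" where
  "sum_cdf mu k z = emeasure (PiM {..<k} (\<lambda>_. mu))
     {xs \<in> space (PiM {..<k} (\<lambda>_. mu)). (\<Sum>i<k. xs i) \<le> z}"

definition real_prob_law :: "real measure \<Rightarrow> bool" where
  "real_prob_law mu \<longleftrightarrow> prob_space mu \<and> sets mu = sets borel"

lemma space_eq_UNIV_if_sets_borel: "sets mu = sets (borel :: real measure) \<Longrightarrow> space mu = UNIV"
  using sets_eq_imp_space_eq by fastforce

lemma ennreal_cdf_le_1: "prob_space mu \<Longrightarrow> ennreal_cdf mu z \<le> 1"
  unfolding ennreal_cdf_def by (rule prob_space.emeasure_le_1)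

lemma measure_greater_eq_1_minus_ennreal_cdf:
  assumes "prob_space mu" "sets mu = sets borel"
  shows "measure mu {x. z < x} = 1 - enn2real (ennreal_cdf mu z)"
proof -
  interpret prob_space mu by fact
  have "{x. z < x} = space mu - {..z}"
    using assms(2) by (auto simp: space_eq_UNIV_if_sets_borel)
  then show ?thesis
    using prob_compl[of "{..z}"] assms(2) by (simp add: ennreal_cdf_def measure_def)
qed

lemma measure_greater_le_if_ennreal_cdf_le:
  assumes mu: "prob_space mu" "sets mu = sets borel"
    and nu: "prob_space nu" "sets nu = sets borel"
    and le: "ennreal_cdf mu z \<le> ennreal_cdf nu z"
  shows "measure nu {x. z < x} \<le> measure mu {x. z < x}"
proof -
  have "enn2real (ennreal_cdf mu z) \<le> enn2real (ennreal_cdf nu z)"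
    using le ennreal_cdf_le_1[OF nu(1), of z]
    by (intro enn2real_mono) (auto intro: le_less_trans[OF _ ennreal_one_less_top])
  then show ?thesis
    by (simp add: measure_greater_eq_1_minus_ennreal_cdf mu nu)
qed

subsection \<open>Sums of independent copies\<close>

lemma borel_measurable_sum_components:
  assumes "sets mu = sets (borel :: real measure)" "J \<subseteq> I"
  shows "(\<lambda>xs. \<Sum>i\<in>J. xs i) \<in> borel_measurable (PiM I (\<lambda>_. mu))"
proof (rule borel_measurable_sum)
  fix i assume "i \<in> J"
  then have "(\<lambda>xs. xs i) \<in> measurable (PiM I (\<lambda>_. mu)) mu"
    using assms by (intro measurable_component_singleton) auto
  then show "(\<lambda>xs. xs i) \<in> borel_measurable (PiM I (\<lambda>_. mu))"
    using assms measurable_cong_sets by blast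
qed

lemma sets_sum_components_le:
  assumes "sets mu = sets (borel :: real measure)"
  shows "{xs \<in> space (PiM {..<k} (\<lambda>_. mu)). (\<Sum>i<k. xs i) \<le> z} \<in> sets (PiM {..<k} (\<lambda>_. mu))"
  using borel_measurable_sum_components[OF assms, of "{..<k}" "{..<k}"] by measurable

text \<open>Fubini for P(g(X) + Y \<le> z), with X of law P and Y of law \<nu> independent.\<close>
lemma nn_integral_ennreal_cdf_shift:
  assumes P: "prob_space P" and nu: "prob_space nu" "sets nu = sets borel"
    and g[measurable]: "g \<in> borel_measurable P"
  shows "(\<integral>\<^sup>+x. ennreal_cdf nu (z - g x) \<partial>P) = (\<integral>\<^sup>+y. emeasure P {x\<in>space P. g x \<le> z - y} \<partial>nu)"
proof -
  interpret P: prob_space P by fact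
  interpret N: prob_space nu by fact
  interpret pair_sigma_finite P nu by unfold_locales
  define f where "f x y = (indicator {p \<in> space (P \<Otimes>\<^sub>M nu). g (fst p) + snd p \<le> z} (x, y) :: ennreal)"
    for x y
  have f_measurable: "case_prod f \<in> borel_measurable (P \<Otimes>\<^sub>M nu)"
    unfolding f_def using nu(2) by measurable
  have "(\<integral>\<^sup>+y. f x y \<partial>nu) = ennreal_cdf nu (z - g x)" if "x \<in> space P" for x
  proof -
    have "(\<integral>\<^sup>+y. f x y \<partial>nu) = (\<integral>\<^sup>+y. indicator {..z - g x} y \<partial>nu)"
      using that nu(2)
      by (intro nn_integral_cong) (auto simp: f_def space_pair_measure space_eq_UNIV_if_sets_borel indicator_def)
    then show ?thesis
      using nu(2) by (simp add: ennreal_cdf_def)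
  qed
  moreover have "(\<integral>\<^sup>+x. f x y \<partial>P) = emeasure P {x\<in>space P. g x \<le> z - y}" for y
  proof -
    have "(\<integral>\<^sup>+x. f x y \<partial>P) = (\<integral>\<^sup>+x. indicator {x\<in>space P. g x \<le> z - y} x \<partial>P)"
      using nu(2)
      by (intro nn_integral_cong) (auto simp: f_def space_pair_measure space_eq_UNIV_if_sets_borel indicator_def)
    also have "\<dots> = emeasure P {x\<in>space P. g x \<le> z - y}"
      by (intro nn_integral_indicator) measurable
    finally show ?thesis .
  qed
  ultimately show ?thesis
    using Fubini'[OF f_measurable] by (simp cong: nn_integral_cong)
qed

lemma sum_cdf_Suc:
  assumes mu: "prob_space mu" "sets mu = sets borel"
  shows "sum_cdf mu (Suc k) z = (\<integral>\<^sup>+xs. ennreal_cdf mu (z - (\<Sum>i<k. xs i)) \<partial>PiM {..<k} (\<lambda>_. mu))"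
proof -
  interpret prob_space mu by fact
  interpret product_sigma_finite "\<lambda>_. mu" by unfold_locales
  let ?M = "\<lambda>_::nat. mu"
  let ?S = "{xs \<in> space (PiM (insert k {..<k}) ?M). (\<Sum>i\<in>insert k {..<k}. xs i) \<le> z}"
  have S_sets: "?S \<in> sets (PiM (insert k {..<k}) ?M)"
    using sets_sum_components_le[OF mu(2), of "Suc k" z] by (simp add: lessThan_Suc)
  have "sum_cdf mu (Suc k) z = (\<integral>\<^sup>+xs. indicator ?S xs \<partial>PiM (insert k {..<k}) ?M)"
    using S_sets by (simp add: sum_cdf_def lessThan_Suc)
  also have "\<dots> = (\<integral>\<^sup>+x. (\<integral>\<^sup>+y. indicator ?S (x(k:=y)) \<partial>mu) \<partial>PiM {..<k} ?M)"
    by (rule product_nn_integral_insert[OF _ _ borel_measurable_indicator[OF S_sets]]) auto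
  also have "\<dots> = (\<integral>\<^sup>+x. (\<integral>\<^sup>+y. indicator {..z - (\<Sum>i<k. x i)} y \<partial>mu) \<partial>PiM {..<k} ?M)"
  proof (intro nn_integral_cong)
    fix x y assume "x \<in> space (PiM {..<k} ?M)"
    then have "x(k:=y) \<in> space (PiM (insert k {..<k}) ?M)"
      using mu(2) by (auto simp: space_PiM PiE_def extensional_def space_eq_UNIV_if_sets_borel)
    moreover have "(\<Sum>i\<in>insert k {..<k}. (x(k:=y)) i) = (\<Sum>i<k. x i) + y"
      by (simp add: add.commute)
    ultimately show "indicator ?S (x(k:=y)) = (indicator {..z - (\<Sum>i<k. x i)} y :: ennreal)"
      by (auto simp: indicator_def)
  qed
  also have "\<dots> = (\<integral>\<^sup>+xs. ennreal_cdf mu (z - (\<Sum>i<k. xs i)) \<partial>PiM {..<k} ?M)"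
    using mu(2) by (simp add: ennreal_cdf_def)
  finally show ?thesis .
qed

lemma nn_integral_ennreal_cdf_sum_components:
  assumes mu: "prob_space mu" "sets mu = sets borel"
    and nu: "prob_space nu" "sets nu = sets borel"
  shows "(\<integral>\<^sup>+xs. ennreal_cdf nu (z - (\<Sum>i<k. xs i)) \<partial>PiM {..<k} (\<lambda>_. mu))
       = (\<integral>\<^sup>+y. sum_cdf mu k (z - y) \<partial>nu)"
  unfolding sum_cdf_def
  by (rule nn_integral_ennreal_cdf_shift[OF prob_space_PiM nu borel_measurable_sum_components[OF mu(2)]])
     (auto simp: mu)

lemma sum_cdf_Suc_conv:
  assumes "prob_space mu" "sets mu = sets borel"
  shows "sum_cdf mu (Suc k) z = (\<integral>\<^sup>+y. sum_cdf mu k (z - y) \<partial>mu)"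
  using sum_cdf_Suc[OF assms] nn_integral_ennreal_cdf_sum_components[OF assms assms] by simp

lemma sum_cdf_0: "prob_space mu \<Longrightarrow> sum_cdf mu 0 z = (if 0 \<le> z then 1 else 0)"
proof -
  assume "prob_space mu"
  then interpret prob_space "PiM ({}::nat set) (\<lambda>_. mu)" by (rule prob_space_PiM)
  show ?thesis unfolding sum_cdf_def by (auto simp: emeasure_space_1)
qed

lemma sum_cdf_le_1: "prob_space mu \<Longrightarrow> sum_cdf mu k z \<le> 1"
  unfolding sum_cdf_def by (rule prob_space.emeasure_le_1[OF prob_space_PiM]) auto

lemma sum_cdf_mono_law:
  assumes mu: "prob_space mu" "sets mu = sets borel"
    and nu: "prob_space nu" "sets nu = sets borel"
    and le: "\<And>z. ennreal_cdf mu z \<le> ennreal_cdf nu z"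
  shows "sum_cdf mu k z \<le> sum_cdf nu k z"
proof (induction k arbitrary: z)
  case 0
  then show ?case using mu nu by (simp add: sum_cdf_0)
next
  case (Suc k)
  have "sum_cdf mu (Suc k) z = (\<integral>\<^sup>+xs. ennreal_cdf mu (z - (\<Sum>i<k. xs i)) \<partial>PiM {..<k} (\<lambda>_. mu))"
    by (rule sum_cdf_Suc[OF mu])
  also have "\<dots> \<le> (\<integral>\<^sup>+xs. ennreal_cdf nu (z - (\<Sum>i<k. xs i)) \<partial>PiM {..<k} (\<lambda>_. mu))"
    by (intro nn_integral_mono le)
  also have "\<dots> = (\<integral>\<^sup>+y. sum_cdf mu k (z - y) \<partial>nu)"
    by (rule nn_integral_ennreal_cdf_sum_components[OF mu nu])
  also have "\<dots> \<le> (\<integral>\<^sup>+y. sum_cdf nu k (z - y) \<partial>nu)"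
    by (intro nn_integral_mono Suc.IH)
  also have "\<dots> = sum_cdf nu (Suc k) z"
    by (rule sum_cdf_Suc_conv[OF nu, symmetric])
  finally show ?case .
qed

subsection \<open>Random sums and maxima\<close>

lemma borel_measurable_random_sum:
  assumes Kd: "sets Kd = (UNIV :: nat set set)" and mu: "sets mu = sets (borel :: real measure)"
  shows "(\<lambda>(k, xs). \<Sum>i<k. xs i) \<in> borel_measurable (Kd \<Otimes>\<^sub>M PiM UNIV (\<lambda>_. mu))"
proof -
  let ?Q = "Kd \<Otimes>\<^sub>M PiM UNIV (\<lambda>_. mu)"
  have "measurable ?Q Kd = measurable ?Q (count_space UNIV)"
    by (rule measurable_cong_sets) (auto simp: Kd)
  then have "fst \<in> measurable ?Q (count_space UNIV)"
    using measurable_fst by blast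
  moreover have "(\<lambda>p. \<Sum>j<i. snd p j) \<in> borel_measurable ?Q" for i
    using measurable_compose[OF measurable_snd borel_measurable_sum_components[OF mu, of "{..<i}" UNIV]]
    by simp
  ultimately have "(\<lambda>p. (\<lambda>i p. \<Sum>j<i. snd p j) (fst p) p) \<in> borel_measurable ?Q"
    by (rule measurable_compose_countable[rotated])
  then show ?thesis
    by (simp add: case_prod_beta')
qed

lemma ennreal_cdf_rsum:
  assumes Kd: "prob_space Kd" "sets Kd = (UNIV :: nat set set)"
    and mu: "prob_space mu" "sets mu = sets borel"
  shows "ennreal_cdf (rsum Kd mu) z = (\<integral>\<^sup>+k. sum_cdf mu k z \<partial>Kd)"
proof -
  let ?Pi = "PiM UNIV (\<lambda>_::nat. mu)"
  let ?Q = "Kd \<Otimes>\<^sub>M ?Pi"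
  let ?f = "\<lambda>(k, xs). \<Sum>i<k. xs i"
  interpret mu: prob_space mu by fact
  interpret product_prob_space "\<lambda>_::nat. mu" UNIV by unfold_locales
  have f_measurable: "?f \<in> borel_measurable ?Q"
    by (rule borel_measurable_random_sum[OF Kd(2) mu(2)])
  have space_Kd: "space Kd = UNIV"
    using Kd(2) sets_eq_imp_space_eq[of Kd "count_space UNIV"] by auto
  have "ennreal_cdf (rsum Kd mu) z = emeasure ?Q (?f -` {..z} \<inter> space ?Q)"
    unfolding ennreal_cdf_def rsum_def by (rule emeasure_distr[OF f_measurable]) simp
  also have "\<dots> = (\<integral>\<^sup>+k. emeasure ?Pi (Pair k -` (?f -` {..z} \<inter> space ?Q)) \<partial>Kd)"
    by (rule sigma_finite_measure.emeasure_pair_measure_alt[OF sigma_finite_measure_axioms])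
       (rule measurable_sets[OF f_measurable], simp)
  also have "\<dots> = (\<integral>\<^sup>+k. sum_cdf mu k z \<partial>Kd)"
  proof (intro nn_integral_cong)
    fix k :: nat
    let ?X = "{xs \<in> space (PiM {..<k} (\<lambda>_. mu)). (\<Sum>i<k. xs i) \<le> z}"
    have "Pair k -` (?f -` {..z} \<inter> space ?Q) = prod_emb UNIV (\<lambda>_. mu) {..<k} ?X"
      using mu(2)
      by (auto simp: prod_emb_def space_pair_measure space_Kd space_PiM PiE_iff space_eq_UNIV_if_sets_borel)
    then show "emeasure ?Pi (Pair k -` (?f -` {..z} \<inter> space ?Q)) = sum_cdf mu k z"
      by (simp add: sum_cdf_def emeasure_PiM_emb' sets_sum_components_le[OF mu(2)])
  qed
  finally show ?thesis .
qed

lemma measurable_max2_borel: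
  assumes "sets X = sets (borel :: real measure)"
  shows "(\<lambda>(x, y). max x y) \<in> measurable (X \<Otimes>\<^sub>M X) X"
proof -
  have "measurable (X \<Otimes>\<^sub>M X) X = measurable (borel \<Otimes>\<^sub>M borel) (borel :: real measure)"
    by (rule measurable_cong_sets) (auto simp: assms intro!: sets_pair_measure_cong)
  then show ?thesis
    by simp
qed

lemma ennreal_cdf_max2:
  assumes X: "prob_space X" "sets X = sets borel"
  shows "ennreal_cdf (max2 X) z = ennreal_cdf X z * ennreal_cdf X z"
proof -
  interpret prob_space X by fact
  have "(\<lambda>(x, y). max x y) -` {..z} \<inter> space (X \<Otimes>\<^sub>M X) = {..z} \<times> {..z}"
    using X(2) by (auto simp: space_pair_measure space_eq_UNIV_if_sets_borel)
  then have "ennreal_cdf (max2 X) z = emeasure (X \<Otimes>\<^sub>M X) ({..z} \<times> {..z})"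
    unfolding ennreal_cdf_def max2_def
    using emeasure_distr[OF measurable_max2_borel[OF X(2)], of "{..z}"] X(2) by simp
  also have "\<dots> = ennreal_cdf X z * ennreal_cdf X z"
    unfolding ennreal_cdf_def by (rule emeasure_pair_measure_Times) (auto simp: X(2))
  finally show ?thesis .
qed

lemma real_prob_law_max2: "real_prob_law X \<Longrightarrow> real_prob_law (max2 X)"
  unfolding real_prob_law_def max2_def
  by (auto intro: prob_space.prob_space_distr[OF prob_space_pair] measurable_max2_borel)

lemma real_prob_law_rsum:
  assumes Kd: "prob_space Kd" "sets Kd = (UNIV :: nat set set)" and mu: "real_prob_law mu"
  shows "real_prob_law (rsum Kd mu)"
proof -
  have "prob_space (PiM UNIV (\<lambda>_::nat. mu))"
    using mu by (intro prob_space_PiM) (auto simp: real_prob_law_def)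
  then show ?thesis
    unfolding real_prob_law_def rsum_def using mu
    by (auto simp: real_prob_law_def intro: prob_space.prob_space_distr[OF prob_space_pair[OF Kd(1)]]
        borel_measurable_random_sum[OF Kd(2)])
qed

lemma measurable_nat_law:
  "sets G = (UNIV :: nat set set) \<Longrightarrow> measurable G N = measurable (count_space UNIV) N"
  by (rule measurable_cong_sets) simp_all

lemma measurable_pair_nat_law:
  assumes "sets G = (UNIV :: nat set set)"
  shows "measurable (G \<Otimes>\<^sub>M G) N = measurable (count_space UNIV) N"
proof (rule measurable_cong_sets)
  have "sets (G \<Otimes>\<^sub>M G) = sets (count_space (UNIV::nat set) \<Otimes>\<^sub>M count_space (UNIV::nat set))"
    by (rule sets_pair_measure_cong) (simp_all add: assms)
  then show "sets (G \<Otimes>\<^sub>M G) = sets (count_space (UNIV :: (nat \<times> nat) set))"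
    by (subst (asm) pair_measure_countable) auto
qed simp

lemma
  assumes G: "prob_space G" "sets G = (UNIV :: nat set set)"
  shows prob_space_max2_nat: "prob_space (max2 G)"
    and sets_max2_nat: "sets (max2 G) = UNIV"
    and nn_integral_max2_nat:
      "(\<integral>\<^sup>+k. f k \<partial>max2 G) = (\<integral>\<^sup>+p. f (max (fst p) (snd p)) \<partial>(G \<Otimes>\<^sub>M G))"
proof -
  have "space G = UNIV"
    using G(2) sets_eq_imp_space_eq[of G "count_space UNIV"] by auto
  then have max_measurable: "(\<lambda>(x, y). max x y) \<in> measurable (G \<Otimes>\<^sub>M G) G"
    by (simp add: measurable_pair_nat_law[OF G(2)])
  show "prob_space (max2 G)"
    unfolding max2_def
    by (rule prob_space.prob_space_distr[OF prob_space_pair[OF G(1) G(1)] max_measurable])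
  show "sets (max2 G) = UNIV"
    by (simp add: max2_def G(2))
  have "f \<in> borel_measurable G"
    by (simp add: measurable_nat_law[OF G(2)])
  then show "(\<integral>\<^sup>+k. f k \<partial>max2 G) = (\<integral>\<^sup>+p. f (max (fst p) (snd p)) \<partial>(G \<Otimes>\<^sub>M G))"
    unfolding max2_def by (simp add: nn_integral_distr[OF max_measurable] case_prod_beta)
qed

lemma nn_integral_pair_nat_law_mult:
  assumes G: "prob_space G" "sets G = (UNIV :: nat set set)"
  shows "(\<integral>\<^sup>+p. f (fst p) * f (snd p) \<partial>(G \<Otimes>\<^sub>M G)) = (\<integral>\<^sup>+k. f k \<partial>G) * (\<integral>\<^sup>+k. f k \<partial>G)"
proof -
  interpret prob_space G by fact
  have f_measurable: "f \<in> borel_measurable G"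
    by (simp add: measurable_nat_law[OF G(2)])
  have "(\<integral>\<^sup>+p. f (fst p) * f (snd p) \<partial>(G \<Otimes>\<^sub>M G)) = (\<integral>\<^sup>+x. \<integral>\<^sup>+y. f x * f y \<partial>G \<partial>G)"
    by (rule nn_integral_fst[symmetric, where f = "\<lambda>p. f (fst p) * f (snd p)", simplified])
       (simp add: measurable_pair_nat_law[OF G(2)])
  also have "\<dots> = (\<integral>\<^sup>+x. f x * (\<integral>\<^sup>+y. f y \<partial>G) \<partial>G)"
    by (intro nn_integral_cong nn_integral_cmult f_measurable)
  also have "\<dots> = (\<integral>\<^sup>+k. f k \<partial>G) * (\<integral>\<^sup>+k. f k \<partial>G)"
    by (rule nn_integral_multc[OF f_measurable])
  finally show ?thesis .
qed

lemma sum_cdf_mult_le_max: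
  assumes "prob_space mu"
  shows "sum_cdf mu i z * sum_cdf mu j z \<le> sum_cdf mu (max i j) z"
proof -
  have "sum_cdf mu i z * sum_cdf mu j z \<le> 1 * sum_cdf mu j z"
    by (intro mult_right_mono sum_cdf_le_1 assms) simp
  moreover have "sum_cdf mu i z * sum_cdf mu j z \<le> sum_cdf mu i z * 1"
    by (intro mult_left_mono sum_cdf_le_1 assms) simp
  ultimately show ?thesis
    by (simp add: max_def)
qed

lemma ennreal_cdf_max2_rsum_le_rsum_max2:
  assumes G: "prob_space G" "sets G = (UNIV :: nat set set)"
    and M: "real_prob_law M" and R: "real_prob_law R"
    and le: "\<And>z. ennreal_cdf M z \<le> ennreal_cdf R z"
  shows "ennreal_cdf (max2 (rsum G M)) z \<le> ennreal_cdf (rsum (max2 G) R) z"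
proof -
  have M': "prob_space M" "sets M = sets borel" and R': "prob_space R" "sets R = sets borel"
    using M R by (auto simp: real_prob_law_def)
  have S: "prob_space (rsum G M)" "sets (rsum G M) = sets borel"
    using real_prob_law_rsum[OF G M] by (auto simp: real_prob_law_def)
  let ?A = "\<integral>\<^sup>+k. sum_cdf M k z \<partial>G"
  have "ennreal_cdf (max2 (rsum G M)) z = ?A * ?A"
    using ennreal_cdf_max2[OF S] ennreal_cdf_rsum[OF G M'] by simp
  also have "\<dots> = (\<integral>\<^sup>+p. sum_cdf M (fst p) z * sum_cdf M (snd p) z \<partial>(G \<Otimes>\<^sub>M G))"
    by (rule nn_integral_pair_nat_law_mult[OF G, symmetric])
  also have "\<dots> \<le> (\<integral>\<^sup>+p. sum_cdf M (max (fst p) (snd p)) z \<partial>(G \<Otimes>\<^sub>M G))"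
    by (intro nn_integral_mono sum_cdf_mult_le_max M')
  also have "\<dots> = (\<integral>\<^sup>+k. sum_cdf M k z \<partial>max2 G)"
    by (rule nn_integral_max2_nat[OF G, symmetric])
  also have "\<dots> \<le> (\<integral>\<^sup>+k. sum_cdf R k z \<partial>max2 G)"
    by (intro nn_integral_mono sum_cdf_mono_law[OF M' R'] le)
  also have "\<dots> = ennreal_cdf (rsum (max2 G) R) z"
    by (rule ennreal_cdf_rsum[OF prob_space_max2_nat[OF G] sets_max2_nat[OF G] R', symmetric])
  finally show ?thesis .
qed

lemma real_prob_law_geomT0: "real_prob_law (geomT0 p)"
  unfolding real_prob_law_def geomT0_def geom1_def
  by (auto intro: prob_space.prob_space_distr[OF measure_pmf.prob_space_axioms])

lemma real_prob_law_expT0: "0 < p \<Longrightarrow> real_prob_law (expT0 p)"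
  unfolding real_prob_law_def expT0_def by (simp add: prob_space_exponential_density)

lemma prob_space_geom1: "prob_space (geom1 q)"
  and sets_geom1: "sets (geom1 q) = UNIV"
  by (simp_all add: geom1_def measure_pmf.prob_space_axioms)

lemma real_prob_law_Tlaw: "real_prob_law T0 \<Longrightarrow> real_prob_law (Tlaw ps T0 n)"
  by (induction n) (simp_all add: real_prob_law_rsum[OF prob_space_geom1 sets_geom1] real_prob_law_max2)

lemma real_prob_law_Mlaw: "real_prob_law T0 \<Longrightarrow> real_prob_law (Mlaw ps T0 n)"
  by (simp add: Mlaw_def real_prob_law_Tlaw real_prob_law_max2)

lemma real_prob_law_Rlaw: "real_prob_law T0 \<Longrightarrow> real_prob_law (Rlaw ps T0 n)"
  by (induction n)
     (simp_all add: real_prob_law_max2 real_prob_law_rsum[OF prob_space_max2_nat sets_max2_nat,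
        OF prob_space_geom1 sets_geom1 prob_space_geom1 sets_geom1])

lemma ennreal_cdf_Mlaw_le_Rlaw:
  assumes "real_prob_law T0"
  shows "ennreal_cdf (Mlaw ps T0 n) z \<le> ennreal_cdf (Rlaw ps T0 n) z"
proof (induction n arbitrary: z)
  case 0
  show ?case
    by (simp add: Mlaw_def)
next
  case (Suc n)
  show ?case
    using ennreal_cdf_max2_rsum_le_rsum_max2[OF prob_space_geom1 sets_geom1
        real_prob_law_Mlaw[OF assms] real_prob_law_Rlaw[OF assms] Suc.IH]
    by (simp add: Mlaw_def)
qed

theorem lemma11:
  fixes pgen pswap :: real and T0 :: "real measure"
  assumes "0 < pgen" and "pgen < 1" and "0 < pswap" and "pswap \<le> 1"
    and "T0 = geomT0 pgen \<or> T0 = expT0 pgen"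
  shows "\<forall>n::nat. \<forall>z::real.
           measure (Mlaw pswap T0 n) {x. z < x} \<ge> measure (Rlaw pswap T0 n) {x. z < x}"
proof (intro allI)
  fix n :: nat and z :: real
  have T0: "real_prob_law T0"
    using assms(5) real_prob_law_geomT0 real_prob_law_expT0[OF assms(1)] by auto
  show "measure (Mlaw pswap T0 n) {x. z < x} \<ge> measure (Rlaw pswap T0 n) {x. z < x}"
    using real_prob_law_Mlaw[OF T0] real_prob_law_Rlaw[OF T0]
    by (intro measure_greater_le_if_ennreal_cdf_le ennreal_cdf_Mlaw_le_Rlaw T0)
       (auto simp: real_prob_law_def)
qed

end
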